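(* Let $p\in(0,1)$ and $\varepsilon>0$. Let $n<m$ be positive integers with $b=n/m$. With probability $1-\exp(-\Omega_\varepsilon(n))$, a random linear rank metric code $\mathcal{C}\subseteq\mathbb{F}_2^{m\times n}$ of rate $R=(1-p)(1-bp)-\varepsilon$ satisfies $S_{\mathcal{C}}\le2$.
   Context: $\mathcal{B}_R(X,pn)=\{Z\in\mathbb{F}_2^{m\times n}:\mathrm{rank}(X-Z)\le pn\}$; $L_{\mathcal{C}}(X)=|\mathcal{B}_R(X,pn)\cap\mathcal{C}|$; $A_{\mathcal{C}}(X)=2^{\frac{\varepsilon}{1+\varepsilon}nL_{\mathcal{C}}(X)}$; $S_{\mathcal{C}}=\mathbb{E}_{X\sim\mathbb{F}_2^{m\times n}}[A_{\mathcal{C}}(X)]$ ($X$ uniform). A random linear rank metric code of rate $R$ is $\mathrm{span}_{\mathbb{F}_2}(Y_1,\dots,Y_k)$ with $k=Rmn$ (an integer) and $Y_i$ independent uniform in $\mathbb{F}_2^{m\times n}$. The statement is for $m,n$ sufficiently large. *)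

theory Defs
  imports Complex_Main "HOL-Library.Z2" "Jordan_Normal_Form.DL_Rank"
begin

text \<open>Matrices over F_2 are JNF matrices over the two-element field bit.
  F_2^{m x n} is carrier_mat m n (m rows, n columns).\<close>

definition mats :: "nat \<Rightarrow> nat \<Rightarrow> bit mat set" where
  "mats m n = carrier_mat m n"

definition rank2 :: "nat \<Rightarrow> bit mat \<Rightarrow> nat" where
  "rank2 m A = vec_space.rank m A"

definition rank_ball :: "nat \<Rightarrow> nat \<Rightarrow> real \<Rightarrow> bit mat \<Rightarrow> bit mat set" where
  "rank_ball m n p X = {Z \<in> mats m n. real (rank2 m (X - Z)) \<le> p * real n}"

definition list_size :: "nat \<Rightarrow> nat \<Rightarrow> real \<Rightarrow> bit mat set \<Rightarrow> bit mat \<Rightarrow> nat" where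
  "list_size m n p C X = card (rank_ball m n p X \<inter> C)"

definition A_C :: "nat \<Rightarrow> nat \<Rightarrow> real \<Rightarrow> real \<Rightarrow> bit mat set \<Rightarrow> bit mat \<Rightarrow> real" where
  "A_C m n p \<epsilon> C X = 2 powr (\<epsilon> / (1 + \<epsilon>) * real n * real (list_size m n p C X))"

definition S_C :: "nat \<Rightarrow> nat \<Rightarrow> real \<Rightarrow> real \<Rightarrow> bit mat set \<Rightarrow> real" where
  "S_C m n p \<epsilon> C = (\<Sum>X\<in>mats m n. A_C m n p \<epsilon> C X) / real (card (mats m n))"

definition span_code :: "nat \<Rightarrow> nat \<Rightarrow> nat \<Rightarrow> (nat \<Rightarrow> bit mat) \<Rightarrow> bit mat set" where
  "span_code m n k Y = {mat m n (\<lambda>(i,j). \<Sum>l<k. c l * (Y l $$ (i,j))) | c :: nat \<Rightarrow> bit. True}"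

text \<open>Sample space of k independent uniform generators, and probability of an event.\<close>
definition gens :: "nat \<Rightarrow> nat \<Rightarrow> nat \<Rightarrow> (nat \<Rightarrow> bit mat) set" where
  "gens m n k = PiE {..<k} (\<lambda>_. mats m n)"

definition rlc_prob :: "nat \<Rightarrow> nat \<Rightarrow> nat \<Rightarrow> (bit mat set \<Rightarrow> bool) \<Rightarrow> real" where
  "rlc_prob m n k P =
     real (card {Y \<in> gens m n k. P (span_code m n k Y)}) / real (card (gens m n k))"

end

theory Submission
  imports Defs "HOL-Library.Function_Algebras"
begin

text \<open>
  Call a code bad if some rank-metric ball of radius \<open>p n\<close> contains at least \<open>2^l\<close> codewords,
  where \<open>l \<approx> 4/\<epsilon>\<close> is a constant. The coefficient vectors in \<open>\<bbbF>\<^sub>2^k\<close> of \<open>2^l\<close> distinct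
  codewords contain \<open>l\<close> linearly independent ones, and codewords with independent coefficient
  vectors are independent and uniform in \<open>\<bbbF>\<^sub>2^(m\<times>n)\<close>. A union bound over the centre \<open>X\<close> and
  the \<open>l\<close> coefficient vectors bounds the probability that the code is bad by
  \<open>2^(mn) 2^(kl) (|B| / 2^(mn))^l\<close>, where \<open>|B| \<le> 2^(n + r(m+n-r))\<close> bounds the number of
  matrices of rank at most \<open>r = \<lfloor>p n\<rfloor>\<close>. The rate is chosen so that
  \<open>2^k |B| / 2^(mn) \<le> 2^(n - \<epsilon>mn)\<close>, which makes this at most \<open>2^(-n)\<close>.
  For a good code, \<open>A\<^sub>C(X) \<le> 2^(\<epsilon> n 2^l)\<close> if the list at \<open>X\<close> is nonempty and \<open>A\<^sub>C(X) = 1\<close>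
  otherwise, and the list is nonempty for at most \<open>|C| |B| \<le> 2^k |B|\<close> centres; hence
  \<open>S\<^sub>C \<le> 1 + 2^(\<epsilon> n 2^l) 2^(n - \<epsilon>mn) \<le> 2\<close>.
\<close>

\<comment> \<open>treat \<open>+\<close> and \<open>*\<close> on \<open>bit\<close> as field operations rather than as \<open>xor\<close> and \<open>and\<close>\<close>
declare add_bit_eq_xor[simp del] mult_bit_eq_and[simp del]

section \<open>Vectors over \<open>\<bbbF>\<^sub>2\<close>\<close>

text \<open>Coefficient vectors and matrix columns are modelled as functions \<open>nat \<Rightarrow> bit\<close>, so that
  the spaces of all dimensions live in one type.\<close>

type_synonym vec2 = "nat \<Rightarrow> bit"

lemma UNIV_bit: "(UNIV :: bit set) = {0, 1}"
  by (auto intro: bit.exhaust)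

lemma finite_UNIV_bit [simp]: "finite (UNIV :: bit set)"
  by (simp add: UNIV_bit)

lemma card_UNIV_bit [simp]: "card (UNIV :: bit set) = 2"
  by (simp add: UNIV_bit)

lemma bit_add_self [simp]: "(x::bit) + x = 0"
  by (cases x) simp_all

lemma bit_add_eq_0_iff: "(x::bit) + y = 0 \<longleftrightarrow> x = y"
  by (cases x; cases y) simp_all

lemma vec2_add_eq_0_iff: "(x::vec2) + y = 0 \<longleftrightarrow> x = y"
  by (simp add: fun_eq_iff bit_add_eq_0_iff)

lemma sum_fun_apply: "(\<Sum>i\<in>A. (f i :: 'a \<Rightarrow> 'b::comm_monoid_add)) x = (\<Sum>i\<in>A. f i x)"
  by (induction A rule: infinite_finite_induct) auto

definition span_F2 :: "vec2 set \<Rightarrow> vec2 set" where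
  "span_F2 F = (\<lambda>I. \<Sum>I) ` Pow F"

definition indep_F2 :: "vec2 set \<Rightarrow> bool" where
  "indep_F2 F \<longleftrightarrow> (\<forall>I\<subseteq>F. I \<noteq> {} \<longrightarrow> \<Sum>I \<noteq> 0)"

lemma finite_span_F2: "finite F \<Longrightarrow> finite (span_F2 F)"
  unfolding span_F2_def by simp

lemma card_span_F2_le: "finite F \<Longrightarrow> card (span_F2 F) \<le> 2 ^ card F"
  unfolding span_F2_def by (metis card_Pow card_image_le finite_Pow_iff)

lemma span_F2_mono: "F \<subseteq> G \<Longrightarrow> span_F2 F \<subseteq> span_F2 G"
  unfolding span_F2_def by auto

lemma span_F2_superset: "x \<in> F \<Longrightarrow> x \<in> span_F2 F"
  unfolding span_F2_def by (rule image_eqI[of _ _ "{x}"]) auto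

lemma indep_F2_subset: "indep_F2 F \<Longrightarrow> G \<subseteq> F \<Longrightarrow> indep_F2 G"
  unfolding indep_F2_def by blast

lemma indep_F2_insert:
  assumes "finite F" "indep_F2 F" "x \<notin> span_F2 F"
  shows "indep_F2 (insert x F)"
  unfolding indep_F2_def
proof (intro allI impI)
  fix I assume I: "I \<subseteq> insert x F" "I \<noteq> {}"
  show "\<Sum>I \<noteq> 0"
  proof (cases "x \<in> I")
    case False
    then show ?thesis using I assms(2) unfolding indep_F2_def by blast
  next
    case True
    have "finite I" using I assms(1) finite_subset by auto
    then have "\<Sum>I = x + \<Sum>(I - {x})" using True by (simp add: sum.remove)
    moreover have "\<Sum>(I - {x}) \<in> span_F2 F" using I unfolding span_F2_def by auto
    ultimately show ?thesis using assms(3) vec2_add_eq_0_iff by metis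
  qed
qed

lemma exists_indep_F2_spanning_subset:
  "finite S \<Longrightarrow> \<exists>F\<subseteq>S. indep_F2 F \<and> S \<subseteq> span_F2 F"
proof (induction S rule: finite_induct)
  case empty
  then show ?case by (auto simp: indep_F2_def)
next
  case (insert x S)
  then obtain F where F: "F \<subseteq> S" "indep_F2 F" "S \<subseteq> span_F2 F" by blast
  have "finite F" using F(1) insert(1) finite_subset by blast
  show ?case
  proof (cases "x \<in> span_F2 F")
    case True
    then show ?thesis using F by blast
  next
    case False
    have "insert x S \<subseteq> span_F2 (insert x F)"
      using F(3) span_F2_mono[of F "insert x F"] span_F2_superset[of x "insert x F"] by auto
    then show ?thesis using F indep_F2_insert[OF \<open>finite F\<close> F(2) False] by blast
  qed
qed

lemma exists_indep_F2_subset_card: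
  assumes "finite S" "2 ^ l \<le> card S"
  shows "\<exists>F\<subseteq>S. indep_F2 F \<and> card F = l"
proof -
  obtain F where F: "F \<subseteq> S" "indep_F2 F" "S \<subseteq> span_F2 F"
    using exists_indep_F2_spanning_subset[OF assms(1)] by blast
  have fin: "finite F" using F(1) assms(1) finite_subset by blast
  have "2 ^ l \<le> card (span_F2 F)"
    using assms(2) card_mono[OF finite_span_F2[OF fin] F(3)] by linarith
  also have "\<dots> \<le> 2 ^ card F" using card_span_F2_le[OF fin] .
  finally have "l \<le> card F" by simp
  then obtain G where "G \<subseteq> F" "card G = l" by (meson obtain_subset_with_card_n)
  then show ?thesis using F indep_F2_subset by blast
qed

definition vecs_F2 :: "nat \<Rightarrow> vec2 set" where
  "vecs_F2 k = {v. \<forall>i\<ge>k. v i = 0}"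

lemma vecs_F2_subset_image_Pow:
  "vecs_F2 k \<subseteq> (\<lambda>S i. if i \<in> S then 1 else 0) ` Pow {..<k}"
proof
  fix v assume v: "v \<in> vecs_F2 k"
  have "v = (\<lambda>i. if i \<in> {i. i < k \<and> v i = 1} then 1 else 0)"
    using v by (auto simp: vecs_F2_def fun_eq_iff)
  then show "v \<in> (\<lambda>S i. if i \<in> S then 1 else 0) ` Pow {..<k}" by (rule image_eqI) auto
qed

lemma finite_vecs_F2: "finite (vecs_F2 k)"
  using vecs_F2_subset_image_Pow finite_subset by blast

lemma card_vecs_F2_le: "card (vecs_F2 k) \<le> 2 ^ k"
proof -
  have "card (vecs_F2 k) \<le> card ((\<lambda>S i. if i \<in> S then (1::bit) else 0) ` Pow {..<k})"
    using vecs_F2_subset_image_Pow by (intro card_mono) auto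
  also have "\<dots> \<le> card (Pow {..<k})" by (rule card_image_le) simp
  finally show ?thesis by (simp add: card_Pow)
qed

section \<open>Characters of \<open>\<bbbF>\<^sub>2\<close>\<close>

definition chi :: "bit \<Rightarrow> real" where
  "chi x = (if x = 0 then 1 else -1)"

lemma chi_zero [simp]: "chi 0 = 1"
  by (simp add: chi_def)

lemma chi_add: "chi (x + y) = chi x * chi y"
  by (cases x; cases y) (simp_all add: chi_def)

lemma chi_plus_one: "chi (x + 1) = - chi x"
  by (cases x) (simp_all add: chi_def)

lemma chi_sum: "chi (\<Sum>a\<in>A. f a) = (\<Prod>a\<in>A. chi (f a))"
  by (induction A rule: infinite_finite_induct) (simp_all add: chi_add)

lemma indicator_all_zero_eq_chi_average:
  assumes "finite P"
  shows "(if \<forall>p\<in>P. d p = 0 then 1 else 0) = (\<Sum>I\<in>Pow P. \<Prod>p\<in>I. chi (d p)) / 2 ^ card P"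
proof -
  have "(if \<forall>p\<in>P. d p = 0 then 1 else 0) = (\<Prod>p\<in>P. (chi (d p) + 1) / (2::real))"
    using assms by (induction P rule: finite_induct) (auto simp: chi_def)
  also have "\<dots> = (\<Prod>p\<in>P. chi (d p) + 1) / 2 ^ card P"
    by (simp add: prod_dividef)
  also have "(\<Prod>p\<in>P. chi (d p) + 1) = (\<Sum>I\<in>Pow P. \<Prod>p\<in>I. chi (d p))"
    using prod_add[OF assms, of "\<lambda>p. chi (d p)" "\<lambda>_. 1"] by simp
  finally show ?thesis .
qed

definition entries :: "nat \<Rightarrow> nat \<Rightarrow> (nat \<times> nat) set" where
  "entries m n = {..<m} \<times> {..<n}"

lemma finite_entries [simp]: "finite (entries m n)"
  by (simp add: entries_def)

lemma card_entries: "card (entries m n) = m * n"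
  by (simp add: entries_def)

lemma mats_eq_iff:
  "A \<in> mats m n \<Longrightarrow> B \<in> mats m n \<Longrightarrow> A = B \<longleftrightarrow> (\<forall>e\<in>entries m n. A $$ e = B $$ e)"
  by (auto simp: mats_def entries_def intro!: eq_matI)

lemma bij_betw_mats_PiE:
  "bij_betw (\<lambda>M. restrict (\<lambda>e. M $$ e) (entries m n)) (mats m n) (PiE (entries m n) (\<lambda>_. UNIV))"
proof (rule bij_betw_byWitness[where f' = "\<lambda>f. mat m n f"])
  show "\<forall>f\<in>PiE (entries m n) (\<lambda>_. UNIV). restrict (($$) (mat m n f)) (entries m n) = f"
  proof (intro ballI ext)
    fix f e assume "f \<in> PiE (entries m n) (\<lambda>_. UNIV)"
    then show "restrict (($$) (mat m n f)) (entries m n) e = f e"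
      by (cases e) (auto simp: entries_def PiE_def extensional_def)
  qed
  show "(\<lambda>M. restrict (($$) M) (entries m n)) ` mats m n \<subseteq> PiE (entries m n) (\<lambda>_. UNIV)"
    by auto
qed (auto simp: mats_def entries_def intro!: eq_matI)

lemma finite_mats [simp]: "finite (mats m n)"
  using bij_betw_finite[OF bij_betw_mats_PiE] by (simp add: finite_PiE)

lemma card_mats: "card (mats m n) = 2 ^ (m * n)"
  using bij_betw_same_card[OF bij_betw_mats_PiE, of m n] by (simp add: card_PiE card_entries)

lemma sum_chi_mats:
  fixes w :: "nat \<times> nat \<Rightarrow> bit"
  shows "(\<Sum>M\<in>mats m n. chi (\<Sum>e\<in>entries m n. w e * M $$ e))
       = (if \<forall>e\<in>entries m n. w e = 0 then real (card (mats m n)) else 0)"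
proof (cases "\<forall>e\<in>entries m n. w e = 0")
  case False
  then obtain e0 where e0: "e0 \<in> entries m n" "w e0 = 1" by auto
  define flip where "flip M = mat m n (\<lambda>e. if e = e0 then M $$ e + 1 else M $$ e)" for M :: "bit mat"
  define h where "h M = chi (\<Sum>e\<in>entries m n. w e * M $$ e)" for M :: "bit mat"
  have flip_index: "e \<in> entries m n \<Longrightarrow> flip M $$ e = M $$ e + (if e = e0 then 1 else 0)" for M e
    by (cases e) (auto simp: flip_def entries_def)
  have "bij_betw flip (mats m n) (mats m n)"
    by (rule bij_betw_byWitness[where f' = flip]) (auto simp: flip_def mats_def add.assoc intro!: eq_matI)
  moreover have "h (flip M) = - h M" for M
  proof -
    have "(\<Sum>e\<in>entries m n. w e * flip M $$ e)
        = (\<Sum>e\<in>entries m n. w e * M $$ e + (if e = e0 then w e else 0))"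
      by (rule sum.cong) (auto simp: flip_index distrib_left)
    also have "\<dots> = (\<Sum>e\<in>entries m n. w e * M $$ e) + (\<Sum>e\<in>entries m n. if e = e0 then w e else 0)"
      by (rule sum.distrib)
    also have "(\<Sum>e\<in>entries m n. if e = e0 then w e else 0) = 1"
      using e0 by simp
    finally show ?thesis unfolding h_def by (simp only: chi_plus_one)
  qed
  ultimately have "sum h (mats m n) = - sum h (mats m n)"
    using sum.reindex_bij_betw[of flip "mats m n" "mats m n" h] by (simp add: sum_negf)
  then show ?thesis unfolding h_def if_not_P[OF False] by simp
qed simp

lemma finite_gens [simp]: "finite (gens m n k)"
  by (simp add: gens_def finite_PiE)

lemma card_gens: "card (gens m n k) = 2 ^ (m * n * k)"
  by (simp add: gens_def card_PiE card_mats power_mult)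

lemma sum_chi_gens:
  "(\<Sum>Y\<in>gens m n k. chi (\<Sum>l<k. \<Sum>e\<in>entries m n. W l e * Y l $$ e))
     = (if \<forall>l<k. \<forall>e\<in>entries m n. W l e = 0 then real (card (gens m n k)) else 0)"
proof -
  have "(\<Sum>Y\<in>gens m n k. chi (\<Sum>l<k. \<Sum>e\<in>entries m n. W l e * Y l $$ e))
      = (\<Prod>l<k. \<Sum>M\<in>mats m n. chi (\<Sum>e\<in>entries m n. W l e * M $$ e))"
    unfolding chi_sum gens_def by (rule prod_sum_PiE[symmetric]) auto
  also have "\<dots> = (\<Prod>l<k. if \<forall>e\<in>entries m n. W l e = 0 then real (card (mats m n)) else 0)"
    by (simp only: sum_chi_mats)
  also have "\<dots> = (if \<forall>l<k. \<forall>e\<in>entries m n. W l e = 0 then real (card (gens m n k)) else 0)"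
  proof (cases "\<forall>l<k. \<forall>e\<in>entries m n. W l e = 0")
    case False
    then obtain l where l: "l < k" "\<not> (\<forall>e\<in>entries m n. W l e = 0)" by blast
    have "(\<Prod>l<k. if \<forall>e\<in>entries m n. W l e = 0 then real (card (mats m n)) else 0) = 0"
      by (rule prod_zero) (use l in \<open>auto intro!: bexI[of _ l]\<close>)
    then show ?thesis unfolding if_not_P[OF False] .
  qed (simp add: gens_def card_PiE)
  finally show ?thesis .
qed

section \<open>Uniformity of independent codewords\<close>

definition lin_comb :: "nat \<Rightarrow> nat \<Rightarrow> nat \<Rightarrow> vec2 \<Rightarrow> (nat \<Rightarrow> bit mat) \<Rightarrow> bit mat" where
  "lin_comb m n k c Y = mat m n (\<lambda>(i,j). \<Sum>l<k. c l * Y l $$ (i,j))"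

lemma span_code_eq_range: "span_code m n k Y = range (\<lambda>c. lin_comb m n k c Y)"
  unfolding span_code_def lin_comb_def by auto

lemma lin_comb_in_mats [simp]: "lin_comb m n k c Y \<in> mats m n"
  by (simp add: lin_comb_def mats_def)

lemma lin_comb_index: "e \<in> entries m n \<Longrightarrow> lin_comb m n k c Y $$ e = (\<Sum>l<k. c l * Y l $$ e)"
  by (cases e) (auto simp: lin_comb_def entries_def)

lemma sum_lin_comb_regroup:
  fixes F :: "vec2 set" and Y :: "nat \<Rightarrow> bit mat"
  assumes "finite F" "I \<subseteq> F \<times> entries m n"
  shows "(\<Sum>p\<in>I. \<Sum>l<k. fst p l * Y l $$ snd p)
       = (\<Sum>l<k. \<Sum>e\<in>entries m n. (\<Sum>v\<in>F. if (v,e) \<in> I then v l else 0) * Y l $$ e)"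
proof -
  have restrict: "(\<Sum>p\<in>I. f p) = (\<Sum>v\<in>F. \<Sum>e\<in>entries m n. if (v,e) \<in> I then f (v,e) else 0)"
    for f :: "_ \<Rightarrow> bit"
    using sum.inter_restrict[of "F \<times> entries m n" f I] assms
    by (simp add: Int_absorb1 sum.cartesian_product)
  have "(\<Sum>p\<in>I. \<Sum>l<k. fst p l * Y l $$ snd p) = (\<Sum>l<k. \<Sum>p\<in>I. fst p l * Y l $$ snd p)"
    by (rule sum.swap)
  also have "\<dots> = (\<Sum>l<k. \<Sum>e\<in>entries m n. \<Sum>v\<in>F. if (v,e) \<in> I then v l * Y l $$ e else 0)"
    by (simp only: restrict fst_conv snd_conv) (simp add: sum.swap[of _ F])
  also have "\<dots> = (\<Sum>l<k. \<Sum>e\<in>entries m n. (\<Sum>v\<in>F. if (v,e) \<in> I then v l else 0) * Y l $$ e)"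
    by (auto simp: sum_distrib_right intro!: sum.cong)
  finally show ?thesis .
qed

lemma indep_F2_coeff_nonzero:
  assumes "F \<subseteq> vecs_F2 k" "indep_F2 F" "finite F" "I \<subseteq> F \<times> E" "I \<noteq> {}"
  shows "\<exists>l<k. \<exists>e\<in>E. (\<Sum>v\<in>F. if (v,e) \<in> I then v l else 0) \<noteq> 0"
proof -
  obtain v0 e0 where ve: "(v0, e0) \<in> I" using assms(5) by auto
  define Ie where "Ie = {v\<in>F. (v,e0) \<in> I}"
  have "Ie \<subseteq> F" "Ie \<noteq> {}" using ve assms(4) by (auto simp: Ie_def)
  then have "\<Sum>Ie \<noteq> 0" using assms(2) unfolding indep_F2_def by blast
  then obtain l where l: "(\<Sum>Ie) l \<noteq> 0" by (auto simp: fun_eq_iff)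
  have coeff: "(\<Sum>v\<in>F. if (v,e0) \<in> I then v l else 0) = (\<Sum>Ie) l"
    unfolding Ie_def sum_fun_apply using assms(3) by (simp add: sum.inter_filter)
  have "l < k"
  proof (rule ccontr)
    assume "\<not> l < k"
    then have "(\<Sum>Ie) l = 0"
      using assms(1) \<open>Ie \<subseteq> F\<close> unfolding sum_fun_apply vecs_F2_def
      by (intro sum.neutral) auto
    with l show False by simp
  qed
  moreover have "e0 \<in> E" using ve assms(4) by auto
  ultimately show ?thesis using coeff l by auto
qed

lemma sum_prod_chi_gens:
  fixes F :: "vec2 set" and T :: "vec2 \<Rightarrow> bit mat"
  assumes "F \<subseteq> vecs_F2 k" "indep_F2 F" "finite F" "I \<subseteq> F \<times> entries m n"
  shows "(\<Sum>Y\<in>gens m n k. \<Prod>p\<in>I. chi (lin_comb m n k (fst p) Y $$ snd p + T (fst p) $$ snd p))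
       = (if I = {} then real (card (gens m n k)) else 0)"
proof -
  define W where "W l e = (\<Sum>v\<in>F. if (v,e) \<in> I then v l else 0)" for l e
  have "(\<Prod>p\<in>I. chi (lin_comb m n k (fst p) Y $$ snd p + T (fst p) $$ snd p))
      = chi (\<Sum>p\<in>I. T (fst p) $$ snd p) * chi (\<Sum>l<k. \<Sum>e\<in>entries m n. W l e * Y l $$ e)" for Y
  proof -
    have "(\<Sum>p\<in>I. lin_comb m n k (fst p) Y $$ snd p) = (\<Sum>p\<in>I. \<Sum>l<k. fst p l * Y l $$ snd p)"
      using assms(4) by (intro sum.cong) (auto simp: lin_comb_index)
    then show ?thesis
      unfolding W_def sum_lin_comb_regroup[OF assms(3,4)]
      by (simp add: chi_sum[symmetric] chi_add[symmetric] sum.distrib add.commute)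
  qed
  then have "(\<Sum>Y\<in>gens m n k. \<Prod>p\<in>I. chi (lin_comb m n k (fst p) Y $$ snd p + T (fst p) $$ snd p))
      = chi (\<Sum>p\<in>I. T (fst p) $$ snd p)
        * (if \<forall>l<k. \<forall>e\<in>entries m n. W l e = 0 then real (card (gens m n k)) else 0)"
    by (simp add: sum_distrib_left[symmetric] sum_chi_gens)
  moreover have "(\<forall>l<k. \<forall>e\<in>entries m n. W l e = 0) \<longleftrightarrow> I = {}"
    using indep_F2_coeff_nonzero[OF assms] unfolding W_def by fastforce
  ultimately show ?thesis by simp
qed

lemma card_filter_eq_sum: "finite A \<Longrightarrow> real (card {x\<in>A. Q x}) = (\<Sum>x\<in>A. if Q x then 1 else 0)"
  by (simp add: sum.If_cases Int_def)

lemma card_lin_comb_eq: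
  fixes F :: "vec2 set" and T :: "vec2 \<Rightarrow> bit mat"
  assumes "F \<subseteq> vecs_F2 k" "indep_F2 F" "finite F" "\<forall>v\<in>F. T v \<in> mats m n"
  shows "real (card {Y\<in>gens m n k. \<forall>v\<in>F. lin_comb m n k v Y = T v})
       = real (card (gens m n k)) / 2 ^ (card F * (m * n))"
proof -
  let ?G = "gens m n k" and ?P = "F \<times> entries m n"
  define d where "d p Y = lin_comb m n k (fst p) Y $$ snd p + T (fst p) $$ snd p" for p Y
  have finP: "finite ?P" using assms(3) by simp
  \<comment> \<open>expand the indicator of the linear system into characters; by independence of \<open>F\<close>
    only the trivial character survives the summation over the generators\<close>
  have "(\<forall>v\<in>F. lin_comb m n k v Y = T v) \<longleftrightarrow> (\<forall>p\<in>?P. d p Y = 0)" for Y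
    using assms(4) mats_eq_iff[OF lin_comb_in_mats] by (auto simp: d_def bit_add_eq_0_iff)
  then have "real (card {Y\<in>?G. \<forall>v\<in>F. lin_comb m n k v Y = T v})
      = (\<Sum>Y\<in>?G. if \<forall>p\<in>?P. d p Y = 0 then 1 else 0)"
    by (simp only: card_filter_eq_sum[OF finite_gens])
  also have "\<dots> = (\<Sum>Y\<in>?G. \<Sum>I\<in>Pow ?P. \<Prod>p\<in>I. chi (d p Y)) / 2 ^ card ?P"
    by (simp only: indicator_all_zero_eq_chi_average[OF finP] sum_divide_distrib)
  also have "\<dots> = (\<Sum>I\<in>Pow ?P. \<Sum>Y\<in>?G. \<Prod>p\<in>I. chi (d p Y)) / 2 ^ card ?P"
    by (subst sum.swap) (rule refl)
  also have "\<dots> = (\<Sum>I\<in>Pow ?P. if I = {} then real (card ?G) else 0) / 2 ^ card ?P"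
    using sum_prod_chi_gens[OF assms(1-3)] unfolding d_def
    by (intro arg_cong2[where f = "(/)"] sum.cong) auto
  also have "\<dots> = real (card ?G) / 2 ^ (card F * (m * n))"
    using finP by (simp add: card_cartesian_product card_entries)
  finally show ?thesis .
qed

section \<open>Counting matrices of low rank\<close>

definition col_vec :: "nat \<Rightarrow> bit mat \<Rightarrow> nat \<Rightarrow> vec2" where
  "col_vec m A j = (\<lambda>i. if i < m then A $$ (i,j) else 0)"

lemma col_vec_in_vecs_F2: "col_vec m A j \<in> vecs_F2 m"
  by (simp add: col_vec_def vecs_F2_def)

lemma col_vec_eq_col: "A \<in> carrier_mat m n \<Longrightarrow> j < n \<Longrightarrow> col_vec m A j = (\<lambda>i. if i < m then col A j $ i else 0)"
  by (auto simp: col_vec_def)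

lemma inj_on_col_if_inj_on_col_vec:
  assumes A: "A \<in> carrier_mat m n" and J: "J \<subseteq> {..<n}" and inj: "inj_on (col_vec m A) J"
  shows "inj_on (col A) J"
proof (rule inj_onI)
  fix x y assume xy: "x \<in> J" "y \<in> J" and eq: "col A x = col A y"
  have "x < n" "y < n" using xy J by auto
  have "col_vec m A x = (\<lambda>i. if i < m then col A x $ i else 0)"
    using col_vec_eq_col[OF A \<open>x < n\<close>] .
  also have "\<dots> = col_vec m A y"
    unfolding eq using col_vec_eq_col[OF A \<open>y < n\<close>] ..
  finally show "x = y" using inj xy by (auto dest: inj_onD)
qed

lemma sum_col_vec_apply:
  assumes A: "A \<in> carrier_mat m n" and I: "I \<subseteq> {..<n}" "inj_on (col A) I" and i: "i < m"
  shows "(\<Sum>t\<in>I. col_vec m A t) i = (\<Sum>x\<in>col A ` I. x $ i)"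
proof -
  have "(\<Sum>t\<in>I. col_vec m A t) i = (\<Sum>t\<in>I. col A t $ i)"
    unfolding sum_fun_apply using A I(1) i by (intro sum.cong) (auto simp: col_vec_def)
  also have "\<dots> = (\<Sum>x\<in>col A ` I. x $ i)"
    using sum.reindex[OF I(2), of "\<lambda>x. x $ i"] by simp
  finally show ?thesis .
qed

lemma sum_bit_mult_eq_sum_filter:
  fixes a f :: "'a \<Rightarrow> bit"
  assumes "finite B"
  shows "(\<Sum>x\<in>B. a x * f x) = (\<Sum>x\<in>{x\<in>B. a x = 1}. f x)"
proof -
  have "(\<Sum>x\<in>B. a x * f x) = (\<Sum>x\<in>B. if a x = 1 then f x else 0)"
    by (rule sum.cong[OF refl]) (metis bit_not_one_iff mult_1 mult_zero_left)
  then show ?thesis using sum.inter_filter[OF assms, of f "\<lambda>x. a x = 1"] by simp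
qed

lemma card_le_rank2_if_indep_F2_cols:
  assumes A: "A \<in> carrier_mat m n" and J: "J \<subseteq> {..<n}" and inj: "inj_on (col_vec m A) J"
    and indep: "indep_F2 (col_vec m A ` J)"
  shows "card J \<le> rank2 m A"
proof -
  interpret V: vec_space "TYPE(bit)" m .
  have inj_col: "inj_on (col A) J" using inj_on_col_if_inj_on_col_vec[OF A J inj] .
  have cols: "col A ` J \<subseteq> set (cols A)" "col A ` J \<subseteq> carrier_vec m"
    using J A by (auto simp: cols_def)
  have "\<not> V.lin_dep (col A ` J)"
  proof
    assume "V.lin_dep (col A ` J)"
    then obtain B a v where B: "finite B" "B \<subseteq> col A ` J" "V.lincomb a B = 0\<^sub>v m" "v \<in> B" "a v \<noteq> 0"
      unfolding V.lin_dep_def by auto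
    define I where "I = {j\<in>J. col A j \<in> B \<and> a (col A j) = 1}"
    have IJ: "I \<subseteq> J" and "I \<noteq> {}" using B unfolding I_def by auto
    have "col_vec m A ` I \<subseteq> col_vec m A ` J" "col_vec m A ` I \<noteq> {}"
      using IJ \<open>I \<noteq> {}\<close> by auto
    then have "\<Sum>(col_vec m A ` I) \<noteq> 0"
      using indep unfolding indep_F2_def by blast
    moreover have "\<Sum>(col_vec m A ` I) = (\<Sum>t\<in>I. col_vec m A t)"
      using sum.reindex[OF inj_on_subset[OF inj IJ], of id] by simp
    moreover have "(\<Sum>t\<in>I. col_vec m A t) i = 0" for i
    proof (cases "i < m")
      case True
      have "col A ` I = {x\<in>B. a x = 1}"
        using B(2) unfolding I_def by auto
      then have "(\<Sum>t\<in>I. col_vec m A t) i = (\<Sum>x\<in>B. a x * x $ i)"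
        using sum_col_vec_apply[OF A _ inj_on_subset[OF inj_col IJ] True] IJ J
          sum_bit_mult_eq_sum_filter[OF B(1)] by simp
      also have "\<dots> = V.lincomb a B $ i"
        using V.lincomb_index[OF True, of B a] B(2) cols(2) by (simp add: subset_trans)
      finally show ?thesis using B(3) True by simp
    qed (simp add: sum_fun_apply col_vec_def)
    ultimately show False by (simp add: fun_eq_iff)
  qed
  then have "card (col A ` J) \<le> V.rank A" using V.rank_ge_card_indpt[OF A cols(1)] by blast
  then show ?thesis using card_image[OF inj_col] by (simp add: rank2_def)
qed

text \<open>A matrix all of whose columns outside \<open>J\<close> are sums of columns in \<open>J\<close> is described by the
  columns in \<open>J\<close> and, for every other column, the subset of \<open>J\<close> it is the sum of.\<close>

definition col_expansion :: "nat \<Rightarrow> nat \<Rightarrow> nat set \<Rightarrow> (nat \<Rightarrow> vec2) \<times> (nat \<Rightarrow> nat set) \<Rightarrow> bit mat" where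
  "col_expansion m n J x = mat m n (\<lambda>(i,j). if j \<in> J then fst x j i else (\<Sum>t\<in>snd x j. fst x t i))"

definition col_expansion_data :: "nat \<Rightarrow> nat \<Rightarrow> nat set \<Rightarrow> ((nat \<Rightarrow> vec2) \<times> (nat \<Rightarrow> nat set)) set" where
  "col_expansion_data m n J = PiE J (\<lambda>_. vecs_F2 m) \<times> PiE ({..<n} - J) (\<lambda>_. Pow J)"

lemma finite_col_expansion_data: "J \<subseteq> {..<n} \<Longrightarrow> finite (col_expansion_data m n J)"
  unfolding col_expansion_data_def using finite_vecs_F2
  by (auto intro!: finite_PiE dest: finite_subset)

lemma card_col_expansion_data_le:
  assumes "J \<subseteq> {..<n}"
  shows "card (col_expansion_data m n J) \<le> 2 ^ (m * card J) * 2 ^ (card J * (n - card J))"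
proof -
  have fin: "finite J" using assms finite_subset by blast
  have "card (PiE J (\<lambda>_. vecs_F2 m)) \<le> (2 ^ m) ^ card J"
    using fin card_vecs_F2_le by (simp add: card_PiE power_mono)
  moreover have "card (PiE ({..<n} - J) (\<lambda>_. Pow J)) = 2 ^ (card J * (n - card J))"
    using fin assms by (simp add: card_PiE card_Pow card_Diff_subset power_mult)
  ultimately show ?thesis
    unfolding col_expansion_data_def card_cartesian_product by (simp add: power_mult)
qed

lemma exists_col_basis:
  obtains J where "J \<subseteq> {..<n}" "inj_on (col_vec m A) J" "indep_F2 (col_vec m A ` J)"
    "\<And>j. j < n \<Longrightarrow> \<exists>I. I \<subseteq> J \<and> col_vec m A j = (\<Sum>t\<in>I. col_vec m A t)"
proof -
  let ?c = "col_vec m A"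
  obtain F where F: "F \<subseteq> ?c ` {..<n}" "indep_F2 F" "?c ` {..<n} \<subseteq> span_F2 F"
    using exists_indep_F2_spanning_subset[of "?c ` {..<n}"] by auto
  obtain J where J: "J \<subseteq> {..<n}" "inj_on ?c J" "F = ?c ` J"
    using F(1) subset_image_inj by metis
  have rep: "\<exists>I. I \<subseteq> J \<and> ?c j = (\<Sum>t\<in>I. ?c t)" if "j < n" for j
  proof -
    obtain I' where I': "I' \<subseteq> F" "?c j = \<Sum>I'"
      using F(3) \<open>j < n\<close> unfolding span_F2_def by auto
    then obtain I where I: "I \<subseteq> J" "I' = ?c ` I" using J(3) subset_image_iff by metis
    then have "\<Sum>I' = (\<Sum>t\<in>I. ?c t)"
      using sum.reindex[OF inj_on_subset[OF J(2) I(1)], of id] by simp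
    then show ?thesis using I I' by auto
  qed
  have "indep_F2 (?c ` J)" using F(2) J(3) by simp
  then show thesis using that[OF J(1,2)] rep by blast
qed

lemma rank2_le_imp_col_expansion:
  assumes A: "A \<in> mats m n" and r: "rank2 m A \<le> r"
  shows "\<exists>J\<subseteq>{..<n}. card J \<le> r \<and> A \<in> col_expansion m n J ` col_expansion_data m n J"
proof -
  let ?c = "col_vec m A"
  have Ac: "A \<in> carrier_mat m n" using A by (simp add: mats_def)
  obtain J where J: "J \<subseteq> {..<n}" "inj_on ?c J" "indep_F2 (?c ` J)"
    and rep: "\<And>j. j < n \<Longrightarrow> \<exists>I. I \<subseteq> J \<and> ?c j = (\<Sum>t\<in>I. ?c t)"
    using exists_col_basis[where n = n and m = m and A = A] by blast
  define pick where "pick j = (SOME I. I \<subseteq> J \<and> ?c j = (\<Sum>t\<in>I. ?c t))" for j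
  define g where "g = restrict pick ({..<n} - J)"
  have g: "g j \<subseteq> J" "?c j = (\<Sum>t\<in>g j. ?c t)" if "j \<in> {..<n} - J" for j
    using that someI_ex[OF rep[of j]] unfolding g_def pick_def by auto
  have "restrict ?c J \<in> PiE J (\<lambda>_. vecs_F2 m)"
    by (simp add: restrict_PiE_iff col_vec_in_vecs_F2)
  moreover have "g \<in> PiE ({..<n} - J) (\<lambda>_. Pow J)"
    unfolding PiE_iff using g(1) by (simp add: g_def)
  ultimately have data: "(restrict ?c J, g) \<in> col_expansion_data m n J"
    unfolding col_expansion_data_def by simp
  have expansion: "col_expansion m n J (restrict ?c J, g) = A"
  proof (rule eq_matI)
    fix i j assume "i < dim_row A" "j < dim_col A"
    then have i: "i < m" and j: "j < n" using Ac by auto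
    show "col_expansion m n J (restrict ?c J, g) $$ (i, j) = A $$ (i, j)"
    proof (cases "j \<in> J")
      case False
      then have "col_expansion m n J (restrict ?c J, g) $$ (i, j) = (\<Sum>t\<in>g j. ?c t i)"
        using i j g(1)[of j] by (auto simp: col_expansion_def intro!: sum.cong)
      also have "\<dots> = ?c j i" using g(2)[of j] j False by (simp add: sum_fun_apply)
      also have "\<dots> = A $$ (i, j)" using i by (simp add: col_vec_def)
      finally show ?thesis .
    qed (use i j in \<open>simp add: col_expansion_def col_vec_def\<close>)
  qed (use Ac in \<open>auto simp: col_expansion_def\<close>)
  have "A \<in> col_expansion m n J ` col_expansion_data m n J"
    by (rule rev_image_eqI[where f = "col_expansion m n J", OF data expansion[symmetric]])
  moreover have "card J \<le> r"
    using card_le_rank2_if_indep_F2_cols[OF Ac J] r by simp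
  ultimately show ?thesis using J(1) by blast
qed

abbreviation low_rank :: "nat \<Rightarrow> nat \<Rightarrow> nat \<Rightarrow> bit mat set" where
  "low_rank m n r \<equiv> {A\<in>mats m n. rank2 m A \<le> r}"

lemma rank_count_exponent_mono:
  fixes d r m n :: nat
  assumes "d \<le> r" "r \<le> n" "n \<le> m"
  shows "m * d + d * (n - d) \<le> r * (m + n - r)"
proof -
  obtain a where "r = d + a" using assms(1) le_Suc_ex by blast
  moreover obtain b where "n = r + b" using assms(2) le_Suc_ex by blast
  moreover obtain c where "m = n + c" using assms(3) le_Suc_ex by blast
  ultimately have "r * (m + n - r) = (m * d + d * (n - d)) + (a * a + 2 * a * b + a * c)"
    by (simp add: algebra_simps)
  then show ?thesis by simp
qed

lemma card_low_rank_le: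
  assumes "r \<le> n" "n \<le> m"
  shows "card (low_rank m n r) \<le> 2 ^ n * 2 ^ (r * (m + n - r))"
proof -
  define Js where "Js = {J. J \<subseteq> {..<n} \<and> card J \<le> r}"
  have fin: "finite Js" unfolding Js_def by auto
  have "low_rank m n r \<subseteq> (\<Union>J\<in>Js. col_expansion m n J ` col_expansion_data m n J)"
  proof
    fix A assume "A \<in> low_rank m n r"
    then have "A \<in> mats m n" "rank2 m A \<le> r" by auto
    from rank2_le_imp_col_expansion[OF this] obtain J
      where "J \<subseteq> {..<n}" "card J \<le> r" "A \<in> col_expansion m n J ` col_expansion_data m n J"
      by (elim exE conjE)
    then show "A \<in> (\<Union>J\<in>Js. col_expansion m n J ` col_expansion_data m n J)"
      unfolding Js_def by blast
  qed
  then have "card (low_rank m n r) \<le> card (\<Union>J\<in>Js. col_expansion m n J ` col_expansion_data m n J)"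
    using fin finite_col_expansion_data unfolding Js_def by (intro card_mono) auto
  also have "\<dots> \<le> (\<Sum>J\<in>Js. card (col_expansion m n J ` col_expansion_data m n J))"
    by (rule card_UN_le[OF fin])
  also have "\<dots> \<le> (\<Sum>J\<in>Js. 2 ^ (r * (m + n - r)))"
  proof (rule sum_mono)
    fix J assume "J \<in> Js"
    then have J: "J \<subseteq> {..<n}" "card J \<le> r" by (auto simp: Js_def)
    have "card (col_expansion m n J ` col_expansion_data m n J) \<le> card (col_expansion_data m n J)"
      using finite_col_expansion_data[OF J(1)] by (rule card_image_le)
    also have "\<dots> \<le> 2 ^ (m * card J + card J * (n - card J))"
      using card_col_expansion_data_le[OF J(1)] by (simp add: power_add)
    also have "\<dots> \<le> 2 ^ (r * (m + n - r))"
      using rank_count_exponent_mono[OF J(2) assms] by (intro power_increasing) auto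
    finally show "card (col_expansion m n J ` col_expansion_data m n J) \<le> 2 ^ (r * (m + n - r))" .
  qed
  also have "\<dots> \<le> 2 ^ n * 2 ^ (r * (m + n - r))"
  proof -
    have "Js \<subseteq> Pow {..<n}" unfolding Js_def by auto
    then have "card Js \<le> 2 ^ n" using card_mono[of "Pow {..<n}" Js] by (simp add: card_Pow)
    then show ?thesis by simp
  qed
  finally show ?thesis .
qed

lemma rank_ball_subset_mats: "rank_ball m n p X \<subseteq> mats m n"
  by (auto simp: rank_ball_def)

lemma finite_rank_ball: "finite (rank_ball m n p X)"
  using rank_ball_subset_mats finite_subset by (metis finite_mats)

lemma rank_ball_diff_in_low_rank:
  assumes "X \<in> mats m n" "Z \<in> rank_ball m n p X"
  shows "X - Z \<in> low_rank m n (nat \<lfloor>p * real n\<rfloor>)"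
  using assms by (auto simp: rank_ball_def mats_def intro: le_nat_floor)

lemma card_rank_ball_le:
  assumes X: "X \<in> mats m n"
  shows "card (rank_ball m n p X) \<le> card (low_rank m n (nat \<lfloor>p * real n\<rfloor>))"
proof -
  have "rank_ball m n p X \<subseteq> (\<lambda>A. X - A) ` low_rank m n (nat \<lfloor>p * real n\<rfloor>)"
  proof
    fix Z assume Z: "Z \<in> rank_ball m n p X"
    then have "Z = X - (X - Z)" using X by (auto simp: rank_ball_def mats_def intro!: eq_matI)
    then show "Z \<in> (\<lambda>A. X - A) ` low_rank m n (nat \<lfloor>p * real n\<rfloor>)"
      using rank_ball_diff_in_low_rank[OF X Z] by blast
  qed
  then have "card (rank_ball m n p X) \<le> card ((\<lambda>A. X - A) ` low_rank m n (nat \<lfloor>p * real n\<rfloor>))"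
    by (intro card_mono) auto
  also have "\<dots> \<le> card (low_rank m n (nat \<lfloor>p * real n\<rfloor>))" by (rule card_image_le) simp
  finally show ?thesis .
qed

lemma card_list_nonempty_le:
  assumes "C \<subseteq> mats m n" "finite C"
  shows "card {X\<in>mats m n. list_size m n p C X \<noteq> 0} \<le> card C * card (low_rank m n (nat \<lfloor>p * real n\<rfloor>))"
proof -
  let ?R = "low_rank m n (nat \<lfloor>p * real n\<rfloor>)"
  have "{X\<in>mats m n. list_size m n p C X \<noteq> 0} \<subseteq> (\<lambda>(Z,A). Z + A) ` (C \<times> ?R)"
  proof
    fix X assume "X \<in> {X\<in>mats m n. list_size m n p C X \<noteq> 0}"
    then obtain Z where X: "X \<in> mats m n" and Z: "Z \<in> rank_ball m n p X" "Z \<in> C"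
      using finite_rank_ball by (auto simp: list_size_def)
    then have "X = Z + (X - Z)" by (auto simp: rank_ball_def mats_def intro!: eq_matI)
    then show "X \<in> (\<lambda>(Z,A). Z + A) ` (C \<times> ?R)"
      using rank_ball_diff_in_low_rank[OF X Z(1)] Z(2) by (intro image_eqI[where x = "(Z, X - Z)"]) auto
  qed
  then have "card {X\<in>mats m n. list_size m n p C X \<noteq> 0} \<le> card ((\<lambda>(Z,A). Z + A) ` (C \<times> ?R))"
    using assms by (intro card_mono) auto
  also have "\<dots> \<le> card (C \<times> ?R)" by (rule card_image_le) (use assms in simp)
  finally show ?thesis by (simp add: card_cartesian_product)
qed

lemma span_code_eq_image_vecs_F2: "span_code m n k Y = (\<lambda>c. lin_comb m n k c Y) ` vecs_F2 k"
proof -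
  have "lin_comb m n k c Y = lin_comb m n k (\<lambda>l. if l < k then c l else 0) Y" for c
    unfolding lin_comb_def by (auto intro!: arg_cong[where f = "mat m n"] sum.cong)
  moreover have "(\<lambda>l. if l < k then c l else 0) \<in> vecs_F2 k" for c :: vec2
    by (simp add: vecs_F2_def)
  ultimately show ?thesis unfolding span_code_eq_range by blast
qed

lemma span_code_subset_mats: "span_code m n k Y \<subseteq> mats m n"
  unfolding span_code_eq_range by auto

lemma finite_span_code: "finite (span_code m n k Y)"
  unfolding span_code_eq_image_vecs_F2 using finite_vecs_F2 by simp

lemma card_span_code_le: "card (span_code m n k Y) \<le> 2 ^ k"
  unfolding span_code_eq_image_vecs_F2
  using card_image_le[OF finite_vecs_F2] card_vecs_F2_le le_trans by blast

section \<open>Codes with a large list\<close>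

definition indep_coeff_sets :: "nat \<Rightarrow> nat \<Rightarrow> vec2 set set" where
  "indep_coeff_sets k l = {F. F \<subseteq> vecs_F2 k \<and> indep_F2 F \<and> card F = l}"

lemma finite_indep_coeff_sets: "finite (indep_coeff_sets k l)"
  using finite_vecs_F2 by (auto simp: indep_coeff_sets_def intro: finite_subset[of _ "Pow (vecs_F2 k)"])

lemma card_indep_coeff_sets_le: "card (indep_coeff_sets k l) \<le> 2 ^ (k * l)"
proof -
  have "card (indep_coeff_sets k l) \<le> card {F. F \<subseteq> vecs_F2 k \<and> card F = l}"
    using finite_vecs_F2 by (intro card_mono) (auto simp: indep_coeff_sets_def)
  also have "\<dots> = card (vecs_F2 k) choose l" using n_subsets[OF finite_vecs_F2] .
  also have "\<dots> \<le> card (vecs_F2 k) ^ l"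
    by (cases "l \<le> card (vecs_F2 k)") (simp_all add: binomial_le_pow binomial_eq_0)
  also have "\<dots> \<le> (2 ^ k) ^ l" using card_vecs_F2_le by (rule power_mono) simp
  finally show ?thesis by (simp add: power_mult)
qed

definition all_in_ball :: "nat \<Rightarrow> nat \<Rightarrow> nat \<Rightarrow> real \<Rightarrow> bit mat \<Rightarrow> vec2 set \<Rightarrow> (nat \<Rightarrow> bit mat) set" where
  "all_in_ball m n k p X F = {Y\<in>gens m n k. \<forall>v\<in>F. lin_comb m n k v Y \<in> rank_ball m n p X}"

lemma card_all_in_ball_le:
  assumes F: "F \<in> indep_coeff_sets k l"
  shows "real (card (all_in_ball m n k p X F))
    \<le> real (card (rank_ball m n p X)) ^ l * real (card (gens m n k)) / 2 ^ (l * (m * n))"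
proof -
  let ?B = "rank_ball m n p X"
  let ?fibre = "\<lambda>T. {Y\<in>gens m n k. \<forall>v\<in>F. lin_comb m n k v Y = T v}"
  have F: "F \<subseteq> vecs_F2 k" "indep_F2 F" "card F = l" "finite F"
    using F finite_vecs_F2 finite_subset by (auto simp: indep_coeff_sets_def)
  have "all_in_ball m n k p X F \<subseteq> (\<Union>T\<in>PiE F (\<lambda>_. ?B). ?fibre T)"
    by (auto simp: all_in_ball_def intro!: UN_I[where a = "restrict (\<lambda>v. lin_comb m n k v _) F"])
  then have "card (all_in_ball m n k p X F) \<le> card (\<Union>T\<in>PiE F (\<lambda>_. ?B). ?fibre T)"
    by (intro card_mono) (auto intro: finite_subset[OF _ finite_gens[of m n k]])
  also have "\<dots> \<le> (\<Sum>T\<in>PiE F (\<lambda>_. ?B). card (?fibre T))"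
    by (rule card_UN_le) (simp add: finite_PiE F(4) finite_rank_ball)
  finally have "real (card (all_in_ball m n k p X F)) \<le> (\<Sum>T\<in>PiE F (\<lambda>_. ?B). real (card (?fibre T)))"
    by (simp only: of_nat_sum[symmetric] of_nat_le_iff)
  also have "\<dots> = (\<Sum>T\<in>PiE F (\<lambda>_. ?B). real (card (gens m n k)) / 2 ^ (l * (m * n)))"
    using card_lin_comb_eq[OF F(1,2,4)] rank_ball_subset_mats F(3) by (intro sum.cong) blast+
  also have "\<dots> = real (card ?B) ^ l * real (card (gens m n k)) / 2 ^ (l * (m * n))"
    using F(3,4) by (simp add: card_PiE)
  finally show ?thesis .
qed

definition large_list :: "nat \<Rightarrow> nat \<Rightarrow> nat \<Rightarrow> real \<Rightarrow> nat \<Rightarrow> (nat \<Rightarrow> bit mat) set" where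
  "large_list m n k p l = {Y\<in>gens m n k. \<exists>X\<in>mats m n. 2 ^ l \<le> list_size m n p (span_code m n k Y) X}"

lemma large_list_subset_all_in_ball:
  "large_list m n k p l \<subseteq> (\<Union>X\<in>mats m n. \<Union>F\<in>indep_coeff_sets k l. all_in_ball m n k p X F)"
proof
  fix Y assume "Y \<in> large_list m n k p l"
  then obtain X where Y: "Y \<in> gens m n k" and X: "X \<in> mats m n"
    and large: "2 ^ l \<le> card (rank_ball m n p X \<inter> span_code m n k Y)"
    by (auto simp: large_list_def list_size_def)
  let ?W = "rank_ball m n p X \<inter> span_code m n k Y"
  have "\<forall>w\<in>?W. \<exists>c. c \<in> vecs_F2 k \<and> lin_comb m n k c Y = w"
    using span_code_eq_image_vecs_F2[of m n k Y] by auto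
  then have "\<exists>coeff. \<forall>w\<in>?W. coeff w \<in> vecs_F2 k \<and> lin_comb m n k (coeff w) Y = w"
    by (rule bchoice)
  then obtain coeff where coeff: "\<forall>w\<in>?W. coeff w \<in> vecs_F2 k \<and> lin_comb m n k (coeff w) Y = w"
    by blast
  have "inj_on coeff ?W"
  proof (rule inj_onI)
    fix w w' assume "w \<in> ?W" "w' \<in> ?W" "coeff w = coeff w'"
    then show "w = w'" using coeff by metis
  qed
  then have "2 ^ l \<le> card (coeff ` ?W)" using large by (simp add: card_image)
  moreover have "finite (coeff ` ?W)" using finite_span_code[of m n k Y] by simp
  ultimately obtain F where F: "F \<subseteq> coeff ` ?W" "indep_F2 F" "card F = l"
    using exists_indep_F2_subset_card by blast
  have "F \<in> indep_coeff_sets k l"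
    using F coeff by (auto simp: indep_coeff_sets_def)
  moreover have "Y \<in> all_in_ball m n k p X F"
    using F(1) coeff Y by (auto simp: all_in_ball_def)
  ultimately show "Y \<in> (\<Union>X\<in>mats m n. \<Union>F\<in>indep_coeff_sets k l. all_in_ball m n k p X F)"
    using X by blast
qed

lemma card_large_list_le_sum:
  "card (large_list m n k p l)
     \<le> (\<Sum>X\<in>mats m n. \<Sum>F\<in>indep_coeff_sets k l. card (all_in_ball m n k p X F))"
proof -
  let ?U = "\<lambda>X. \<Union>F\<in>indep_coeff_sets k l. all_in_ball m n k p X F"
  have "(\<Union>X\<in>mats m n. ?U X) \<subseteq> gens m n k"
    by (auto simp: all_in_ball_def)
  then have "card (large_list m n k p l) \<le> card (\<Union>X\<in>mats m n. ?U X)"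
    by (rule card_mono[OF finite_subset[OF _ finite_gens] large_list_subset_all_in_ball])
  also have "\<dots> \<le> (\<Sum>X\<in>mats m n. card (?U X))"
    by (rule card_UN_le) simp
  also have "\<dots> \<le> (\<Sum>X\<in>mats m n. \<Sum>F\<in>indep_coeff_sets k l. card (all_in_ball m n k p X F))"
    by (intro sum_mono card_UN_le finite_indep_coeff_sets)
  finally show ?thesis .
qed

lemma card_large_list_le:
  "real (card (large_list m n k p l))
     \<le> 2 ^ (m * n) * (2 ^ k * real (card (low_rank m n (nat \<lfloor>p * real n\<rfloor>))) / 2 ^ (m * n)) ^ l
        * real (card (gens m n k))"
proof -
  let ?R = "real (card (low_rank m n (nat \<lfloor>p * real n\<rfloor>)))"
  let ?c = "?R ^ l * real (card (gens m n k)) / 2 ^ (l * (m * n))"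
  have "real (card (large_list m n k p l))
      \<le> (\<Sum>X\<in>mats m n. \<Sum>F\<in>indep_coeff_sets k l. real (card (all_in_ball m n k p X F)))"
    using card_large_list_le_sum by (simp only: of_nat_sum[symmetric] of_nat_le_iff)
  also have "\<dots> \<le> (\<Sum>X\<in>mats m n. \<Sum>F\<in>indep_coeff_sets k l. ?c)"
  proof (intro sum_mono)
    fix X F assume X: "X \<in> mats m n" and F: "F \<in> indep_coeff_sets k l"
    have "real (card (rank_ball m n p X)) \<le> ?R"
      using card_rank_ball_le[OF X] by simp
    then have "real (card (rank_ball m n p X)) ^ l * real (card (gens m n k)) / 2 ^ (l * (m * n)) \<le> ?c"
      by (intro divide_right_mono mult_right_mono power_mono) auto
    with card_all_in_ball_le[OF F] show "real (card (all_in_ball m n k p X F)) \<le> ?c"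
      by (rule order.trans)
  qed
  also have "\<dots> = real (card (mats m n)) * real (card (indep_coeff_sets k l)) * ?c"
    by simp
  also have "\<dots> \<le> 2 ^ (m * n) * 2 ^ (k * l) * ?c"
  proof -
    have "real (card (indep_coeff_sets k l)) \<le> 2 ^ (k * l)"
      using card_indep_coeff_sets_le[of k l] by (simp flip: of_nat_le_iff)
    then have "real (card (mats m n)) * real (card (indep_coeff_sets k l)) \<le> 2 ^ (m * n) * 2 ^ (k * l)"
      by (simp add: card_mats)
    then show ?thesis by (rule mult_right_mono) simp
  qed
  also have "\<dots> = 2 ^ (m * n) * (2 ^ k * ?R / 2 ^ (m * n)) ^ l * real (card (gens m n k))"
  proof -
    have "(2::real) ^ (k * l) = (2 ^ k) ^ l" "(2::real) ^ (l * (m * n)) = (2 ^ (m * n)) ^ l"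
      by (simp_all only: power_mult[symmetric] mult.commute)
    then show ?thesis by (simp add: power_divide power_mult_distrib)
  qed
  finally show ?thesis .
qed

section \<open>Good codes and the main estimate\<close>

lemma S_C_le_if_lists_small:
  assumes C: "C \<subseteq> mats m n" "finite C" and e: "0 < \<epsilon>"
    and good: "\<forall>X\<in>mats m n. list_size m n p C X < 2 ^ l"
  shows "S_C m n p \<epsilon> C \<le> 1 + 2 powr (\<epsilon> * real n * 2 ^ l) * real (card C)
            * real (card (low_rank m n (nat \<lfloor>p * real n\<rfloor>))) / 2 ^ (m * n)"
proof -
  let ?M = "2 powr (\<epsilon> * real n * 2 ^ l)"
  let ?Z = "{X\<in>mats m n. list_size m n p C X \<noteq> 0}"
  have A_C_le: "A_C m n p \<epsilon> C X \<le> 1 + (if X \<in> ?Z then ?M else 0)" if X: "X \<in> mats m n" for X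
  proof (cases "list_size m n p C X = 0")
    case True then show ?thesis by (simp add: A_C_def)
  next
    case False
    have list_le: "real (list_size m n p C X) \<le> 2 ^ l" using good X
      by (metis less_imp_le of_nat_le_iff of_nat_numeral of_nat_power)
    have "\<epsilon> / (1 + \<epsilon>) \<le> \<epsilon>" using e by (simp add: divide_simps)
    then have "\<epsilon> / (1 + \<epsilon>) * real n * real (list_size m n p C X) \<le> \<epsilon> * real n * 2 ^ l"
      using list_le e by (intro mult_mono) auto
    then have "A_C m n p \<epsilon> C X \<le> ?M" unfolding A_C_def by (intro powr_mono) auto
    then show ?thesis using False X by simp
  qed
  have "(\<Sum>X\<in>mats m n. A_C m n p \<epsilon> C X) \<le> (\<Sum>X\<in>mats m n. 1 + (if X \<in> ?Z then ?M else 0))"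
    using A_C_le by (intro sum_mono) auto
  also have "\<dots> = real (card (mats m n)) + ?M * real (card ?Z)"
  proof -
    have "(\<Sum>X\<in>mats m n. (if X \<in> ?Z then ?M else 0)) = (\<Sum>X\<in>?Z. ?M)"
      by (rule sum.mono_neutral_cong_right) auto
    then show ?thesis by (simp add: sum.distrib)
  qed
  also have "\<dots> \<le> real (card (mats m n)) + ?M * (real (card C) * real (card (low_rank m n (nat \<lfloor>p * real n\<rfloor>))))"
    using card_list_nonempty_le[OF C]
    by (intro add_left_mono mult_left_mono) (simp_all only: of_nat_mult[symmetric] of_nat_le_iff, simp)
  finally have S: "(\<Sum>X\<in>mats m n. A_C m n p \<epsilon> C X) \<le> \<dots>" .
  have Q: "real (card (mats m n)) = 2 ^ (m * n)" by (simp add: card_mats)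
  show ?thesis unfolding S_C_def using S by (simp add: Q divide_simps mult.assoc)
qed

lemma rate_exponent_bound:
  fixes p \<epsilon> :: real and m n k :: nat
  assumes p: "0 < p" "p < 1" and mn: "0 < n" "n < m"
    and k: "real k = ((1 - p) * (1 - (real n / real m) * p) - \<epsilon>) * real m * real n"
  shows "real k + real n + real (nat \<lfloor>p * real n\<rfloor> * (m + n - nat \<lfloor>p * real n\<rfloor>))
         \<le> real n - \<epsilon> * real m * real n + real m * real n"
proof -
  define r where "r = nat \<lfloor>p * real n\<rfloor>"
  define y where "y = p * real n"
  have y0: "0 \<le> y" "y \<le> real n" using p unfolding y_def by (auto simp: mult_left_le_one_le)
  have rx: "real r \<le> y" "0 \<le> real r" unfolding r_def y_def using p by auto
  have rn: "r \<le> m + n" using rx y0 mn by linarith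
  have r_term: "real (r * (m + n - r)) = real r * (real m + real n - real r)"
    using rn by (simp add: of_nat_diff)
  \<comment> \<open>\<open>x (m + n - x)\<close> is increasing for \<open>x \<le> n \<le> (m + n)/2\<close>, so rounding \<open>p n\<close> down only helps\<close>
  have "y * (real m + real n - y) - real r * (real m + real n - real r) = (y - real r) * (real m + real n - y - real r)"
    by (simp add: algebra_simps)
  moreover have "0 \<le> (y - real r) * (real m + real n - y - real r)"
    using rx y0 mn by (intro mult_nonneg_nonneg) auto
  ultimately have r_term_le: "real (r * (m + n - r)) \<le> y * (real m + real n - y)"
    using r_term by linarith
  have m_factor: "(1 - (real n / real m) * p) * real m = real m - real n * p"
    using mn by (simp add: field_simps)
  have rearrange: "((1 - p) * t - \<epsilon>) * a * b = (1 - p) * (t * a) * b - \<epsilon> * a * b" for t a b :: real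
    by (simp add: algebra_simps)
  have "real k = (1 - p) * (real m - real n * p) * real n - \<epsilon> * real m * real n"
    using k unfolding rearrange m_factor .
  then have "real k = real m * real n - p * real m * real n - p * real n * real n + p * p * real n * real n - \<epsilon> * real m * real n"
    by (simp add: algebra_simps)
  then have "real k + y * (real m + real n - y) = real m * real n - \<epsilon> * real m * real n"
    unfolding y_def by (simp add: algebra_simps)
  then show ?thesis using r_term_le unfolding r_def by linarith
qed

lemma low_rank_ratio_le:
  fixes p \<epsilon> :: real and m n k :: nat
  assumes p: "0 < p" "p < 1" and mn: "0 < n" "n < m"
    and k: "real k = ((1 - p) * (1 - (real n / real m) * p) - \<epsilon>) * real m * real n"
  shows "2 ^ k * real (card (low_rank m n (nat \<lfloor>p * real n\<rfloor>))) / 2 ^ (m * n)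
    \<le> 2 powr (real n - \<epsilon> * real m * real n)"
proof -
  define r where "r = nat \<lfloor>p * real n\<rfloor>"
  have "p * real n \<le> real n" using p by (simp add: mult_left_le_one_le)
  then have "r \<le> n" unfolding r_def by linarith
  have "real (card (low_rank m n r)) \<le> real (2 ^ n * 2 ^ (r * (m + n - r)) :: nat)"
    using card_low_rank_le[OF \<open>r \<le> n\<close>] mn by (simp only: of_nat_le_iff)
  also have "\<dots> = 2 ^ n * 2 ^ (r * (m + n - r))"
    by simp
  also have "\<dots> = 2 powr (real n + real (r * (m + n - r)))"
    by (simp add: powr_add powr_realpow del: of_nat_mult)
  finally have "2 ^ k * real (card (low_rank m n r)) \<le> 2 powr real k * 2 powr (real n + real (r * (m + n - r)))"
    by (simp add: powr_realpow)
  also have "\<dots> = 2 powr (real k + real n + real (r * (m + n - r)))"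
    by (simp add: powr_add[symmetric] add.assoc)
  also have "\<dots> \<le> 2 powr (real n - \<epsilon> * real m * real n + real m * real n)"
    using rate_exponent_bound[OF p mn k] unfolding r_def by (intro powr_mono) auto
  also have "\<dots> = 2 powr (real n - \<epsilon> * real m * real n) * 2 ^ (m * n)"
    by (simp add: powr_add powr_realpow[symmetric])
  finally show ?thesis unfolding r_def by (simp add: divide_simps)
qed

lemma union_bound_exponent_le:
  fixes e n m l :: real
  assumes e: "0 < e" and n: "0 < n" and m: "n \<le> m" "1 \<le> m" and en: "3 \<le> e * n" and l: "4 / e \<le> l"
  shows "m * n + l * (n - e * m * n) \<le> - n"
proof -
  have em: "3 \<le> e * m" using en m e by (smt (verit) mult_left_mono)
  have "1 * n \<le> (e * m) * n" using em n by (intro mult_right_mono) auto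
  then have d: "n - e * m * n \<le> 0" by simp
  have "l * (n - e * m * n) \<le> (4 / e) * (n - e * m * n)" using mult_right_mono_neg[OF l d] .
  also have "\<dots> = 4 * n / e - 4 * m * n" using e by (simp add: field_simps)
  also have "4 * n / e \<le> 4 * m * n / 3"
  proof -
    have "1 / e \<le> m / 3" using em e by (simp add: field_simps)
    then have "4 * n * (1 / e) \<le> 4 * n * (m / 3)" using n by (intro mult_left_mono) auto
    then show ?thesis by (simp add: algebra_simps)
  qed
  finally have "l * (n - e * m * n) \<le> 4 * m * n / 3 - 4 * m * n" by simp
  then have "l * (n - e * m * n) \<le> - (8/3) * (m * n)" by (simp add: algebra_simps)
  moreover have "n \<le> m * n" using m n by (simp add: mult_le_cancel_right1)
  ultimately show ?thesis using n by linarith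
qed

lemma three_le_eps_mult_if_threshold_le:
  fixes \<epsilon> x :: real
  assumes "0 < \<epsilon>" "2 ^ l + 3 / \<epsilon> \<le> x"
  shows "0 < x" "3 \<le> \<epsilon> * x"
proof -
  have "(0::real) < 2 ^ l" "0 < 3 / \<epsilon>" using assms(1) by simp_all
  then have "0 < x" "3 / \<epsilon> \<le> x" using assms(2) by linarith+
  then show "0 < x" "3 \<le> \<epsilon> * x" using assms(1) by (simp_all add: field_simps)
qed

lemma card_large_list_le_powr:
  fixes p \<epsilon> :: real and m n k l :: nat
  assumes p: "0 < p" "p < 1" and e: "0 < \<epsilon>" and nm: "n < m"
    and k: "real k = ((1 - p) * (1 - (real n / real m) * p) - \<epsilon>) * real m * real n"
    and n: "2 ^ l + 3 / \<epsilon> \<le> real n" and l: "4 / \<epsilon> \<le> real l"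
  shows "real (card (large_list m n k p l)) \<le> 2 powr (- real n) * real (card (gens m n k))"
proof -
  have mn: "0 < n" "n < m" and en: "3 \<le> \<epsilon> * real n"
    using three_le_eps_mult_if_threshold_le[OF e n] nm by simp_all
  let ?ratio = "2 ^ k * real (card (low_rank m n (nat \<lfloor>p * real n\<rfloor>))) / 2 ^ (m * n)"
  let ?\<beta> = "2 powr (real n - \<epsilon> * real m * real n)"
  have "real (card (large_list m n k p l)) \<le> 2 ^ (m * n) * ?ratio ^ l * real (card (gens m n k))"
    by (rule card_large_list_le)
  also have "\<dots> \<le> 2 ^ (m * n) * ?\<beta> ^ l * real (card (gens m n k))"
    using low_rank_ratio_le[OF p mn k] by (intro mult_right_mono mult_left_mono power_mono) auto
  also have "2 ^ (m * n) * ?\<beta> ^ l = 2 powr (real m * real n + real l * (real n - \<epsilon> * real m * real n))"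
  proof -
    have "?\<beta> ^ l = 2 powr (real l * (real n - \<epsilon> * real m * real n))"
      by (rule powr_power) simp
    moreover have "(2::real) ^ (m * n) = 2 powr (real m * real n)"
      using powr_realpow[of 2 "m * n"] by simp
    ultimately show ?thesis by (simp add: powr_add)
  qed
  also have "\<dots> \<le> 2 powr (- real n)"
    using union_bound_exponent_le[OF e, of "real n" "real m" "real l"] mn en l by (intro powr_mono) auto
  finally show ?thesis by (simp add: mult_right_mono)
qed

lemma S_C_span_code_le_2:
  fixes p \<epsilon> :: real and m n k l :: nat
  assumes p: "0 < p" "p < 1" and e: "0 < \<epsilon>" and nm: "n < m"
    and k: "real k = ((1 - p) * (1 - (real n / real m) * p) - \<epsilon>) * real m * real n"
    and n: "2 ^ l + 3 / \<epsilon> \<le> real n"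
    and small: "\<forall>X\<in>mats m n. list_size m n p (span_code m n k Y) X < 2 ^ l"
  shows "S_C m n p \<epsilon> (span_code m n k Y) \<le> 2"
proof -
  have mn: "0 < n" "n < m" using three_le_eps_mult_if_threshold_le[OF e n] nm by simp_all
  have m: "2 ^ l + 3 / \<epsilon> \<le> real m" using n nm by linarith
  let ?C = "span_code m n k Y"
  let ?R = "real (card (low_rank m n (nat \<lfloor>p * real n\<rfloor>)))"
  have "S_C m n p \<epsilon> ?C \<le> 1 + 2 powr (\<epsilon> * real n * 2 ^ l) * real (card ?C) * ?R / 2 ^ (m * n)"
    by (rule S_C_le_if_lists_small[OF span_code_subset_mats finite_span_code e small])
  also have "\<dots> \<le> 1 + 2 powr (\<epsilon> * real n * 2 ^ l) * (2 ^ k * ?R / 2 ^ (m * n))"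
  proof -
    have "real (card ?C) \<le> 2 ^ k"
      using card_span_code_le[of m n k Y] by (simp flip: of_nat_le_iff)
    then have "real (card ?C) * ?R \<le> 2 ^ k * ?R" by (rule mult_right_mono) simp
    then show ?thesis by (simp add: divide_right_mono mult.assoc)
  qed
  also have "\<dots> \<le> 1 + 2 powr (\<epsilon> * real n * 2 ^ l) * 2 powr (real n - \<epsilon> * real m * real n)"
    using low_rank_ratio_le[OF p mn k] by (intro add_left_mono mult_left_mono) auto
  also have "\<dots> = 1 + 2 powr (\<epsilon> * real n * 2 ^ l + (real n - \<epsilon> * real m * real n))"
    by (simp add: powr_add)
  also have "\<dots> \<le> 1 + 2 powr 0"
  proof -
    have "\<epsilon> * real n * 2 ^ l + (real n - \<epsilon> * real m * real n)
        = \<epsilon> * real n * (2 ^ l + 3 / \<epsilon> - real m) - 2 * real n"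
      using e by (simp add: field_simps)
    moreover have "\<epsilon> * real n * (2 ^ l + 3 / \<epsilon> - real m) \<le> 0"
      using e m by (intro mult_nonneg_nonpos) auto
    ultimately show ?thesis by (intro add_left_mono powr_mono) auto
  qed
  finally show ?thesis by simp
qed

lemma rlc_prob_ge_if_exceptions_rare:
  assumes "B \<subseteq> gens m n k" "\<forall>Y\<in>gens m n k - B. P (span_code m n k Y)"
    and "real (card B) \<le> \<delta> * real (card (gens m n k))"
  shows "1 - \<delta> \<le> rlc_prob m n k P"
proof -
  have G: "0 < real (card (gens m n k))" by (simp add: card_gens)
  have "real (card (gens m n k)) - real (card B) = real (card (gens m n k - B))"
    using assms(1) finite_subset[OF assms(1)] by (simp add: card_Diff_subset card_mono of_nat_diff)
  also have "\<dots> \<le> real (card {Y\<in>gens m n k. P (span_code m n k Y)})"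
    using assms(2) by (intro of_nat_mono card_mono) auto
  finally have "(1 - \<delta>) * real (card (gens m n k)) \<le> real (card {Y\<in>gens m n k. P (span_code m n k Y)})"
    using assms(3) by (simp add: algebra_simps)
  then show ?thesis
    unfolding rlc_prob_def using G by (simp add: pos_le_divide_eq)
qed

theorem lemma5:
  fixes p \<epsilon> :: real
  assumes "0 < p" "p < 1" "0 < \<epsilon>"
  shows "\<exists>c>0. \<exists>N::nat. \<forall>m n k :: nat.
           N \<le> n \<longrightarrow> n < m \<longrightarrow>
           real k = ((1 - p) * (1 - (real n / real m) * p) - \<epsilon>) * real m * real n \<longrightarrow>
           rlc_prob m n k (\<lambda>C. S_C m n p \<epsilon> C \<le> 2) \<ge> 1 - exp (- c * real n)"
proof (intro exI[of _ "ln 2"] conjI exI allI impI)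
  define l where "l = nat \<lceil>4 / \<epsilon>\<rceil>"
  fix m n k :: nat
  assume n: "nat \<lceil>2 ^ l + 3 / \<epsilon>\<rceil> \<le> n" and nm: "n < m"
    and k: "real k = ((1 - p) * (1 - (real n / real m) * p) - \<epsilon>) * real m * real n"
  have l: "4 / \<epsilon> \<le> real l" unfolding l_def by linarith
  have n: "2 ^ l + 3 / \<epsilon> \<le> real n" using n by linarith
  have "S_C m n p \<epsilon> (span_code m n k Y) \<le> 2" if "Y \<in> gens m n k - large_list m n k p l" for Y
    using S_C_span_code_le_2[OF assms nm k n] that by (auto simp: large_list_def not_le)
  moreover have "real (card (large_list m n k p l)) \<le> 2 powr (- real n) * real (card (gens m n k))"
    using card_large_list_le_powr[OF assms nm k n l] .
  ultimately have "1 - 2 powr (- real n) \<le> rlc_prob m n k (\<lambda>C. S_C m n p \<epsilon> C \<le> 2)"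
    by (intro rlc_prob_ge_if_exceptions_rare) (auto simp: large_list_def)
  then show "1 - exp (- ln 2 * real n) \<le> rlc_prob m n k (\<lambda>C. S_C m n p \<epsilon> C \<le> 2)"
    by (simp add: powr_def mult.commute)
qed simp

end
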